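(* Fix an association $\kappa$ in which every UE is served by at least one cell and every cell serves at least one UE, and fix a demand vector $\bm{d}\in\mathbb{R}^m_{>0}$. Let $\bm{p}\in\mathbb{R}^n_{>0}$, let $\alpha>1$, and set $\bm{p}'=\bm{p}/\alpha$. Let $\bm{x}$ be the fixed point $\bm{x}=\bm{f}(\bm{h}(\bm{x},\bm{p},\kappa),\bm{d},\kappa)$, and let $\bm{x}'$ be the fixed point $\bm{x}'=\bm{f}(\bm{h}(\bm{x}',\bm{p}',\kappa),\bm{d},\kappa)$. Then $x'_i<\alpha x_i$ for all $i\in\mathcal{I}$.
   Context: Cellular network model. $\mathcal{I}$ is a set of $n$ cells and $\mathcal{J}$ a set of $m$ UEs. For an association $\kappa\in\{0,1\}^{n\times m}$, let $\mathcal{I}_j=\{i:\kappa_{ij}=1\}$ and $\mathcal{J}_i=\{j:\kappa_{ij}=1\}$. $M,B>0$ are constants, $\sigma^2>0$ is the noise power and $g_{ij}>0$ are the channel gains. For $\bm{x}\in\mathbb{R}^n_{\ge0}$ and $\bm{p}\in\mathbb{R}^n_{>0}$: - $h_j(\bm{x},\bm{p},\kappa)=\dfrac{\sum_{i\in\mathcal{I}_j}p_ig_{ij}}{\sum_{k\in\mathcal{I}\setminus\mathcal{I}_j}p_kg_{kj}x_k+\sigma^2}$; - $f_i(\bm{\gamma},\bm{d},\kappa)=\sum_{j\in\mathcal{J}_i}\dfrac{d_j}{MB\log_2(1+\gamma_j)}$. It is known, and assumed here, that for fixed $\bm{p},\bm{d},\kappa$ the map $\bm{x}\mapsto\bm{f}(\bm{h}(\bm{x},\bm{p},\kappa),\bm{d},\kappa)$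 is a standard interference function with a unique fixed point in $\mathbb{R}^n_{\ge0}$. *)

theory Defs
  imports Complex_Main
begin

text \<open>Cells are the elements of a finite type 'i, UEs of a finite type 'j.
  An association kappa is a 0/1 matrix, represented as a boolean relation:
  kappa i j means kappa_ij = 1.\<close>

definition hfun :: "('i::finite \<Rightarrow> 'j::finite \<Rightarrow> bool) \<Rightarrow> ('i \<Rightarrow> 'j \<Rightarrow> real) \<Rightarrow> real
    \<Rightarrow> ('i \<Rightarrow> real) \<Rightarrow> ('i \<Rightarrow> real) \<Rightarrow> 'j \<Rightarrow> real" where
  "hfun \<kappa> g \<sigma>2 x p j =
     (\<Sum>i\<in>{i. \<kappa> i j}. p i * g i j) /
     ((\<Sum>k\<in>{k. \<not> \<kappa> k j}. p k * g k j * x k) + \<sigma>2)"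

definition ffun :: "('i::finite \<Rightarrow> 'j::finite \<Rightarrow> bool) \<Rightarrow> real \<Rightarrow> real
    \<Rightarrow> ('j \<Rightarrow> real) \<Rightarrow> ('j \<Rightarrow> real) \<Rightarrow> 'i \<Rightarrow> real" where
  "ffun \<kappa> M B \<gamma> d i = (\<Sum>j\<in>{j. \<kappa> i j}. d j / (M * B * log 2 (1 + \<gamma> j)))"

end

theory Submission
  imports Defs
begin

text \<open>Let \<open>c\<close> be the largest ratio \<open>x'\<^sub>i / x\<^sub>i\<close> and suppose \<open>c \<ge> \<alpha>\<close>. Then \<open>x' \<le> c x\<close>,
  so with the powers divided by \<open>\<alpha>\<close> every SINR satisfies \<open>\<gamma>'\<^sub>j \<ge> \<gamma>\<^sub>j / c\<close>.
  Since \<open>log (1 + \<gamma>)\<close> is strictly concave and vanishes at \<open>0\<close>,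
  \<open>log (1 + \<gamma>/c) > log (1 + \<gamma>) / c\<close>, hence every load term of \<open>f\<close> grows by a factor
  strictly less than \<open>c\<close> and \<open>x' < c x\<close> everywhere, contradicting the choice of \<open>c\<close>
  at a cell attaining the maximum.\<close>

lemma ln_one_plus_less_mult_ln_one_plus_divide:
  fixes c g :: real
  assumes "c > 1" "g > 0"
  shows "ln (1 + g) < c * ln (1 + g / c)"
proof -
  define u where "u = g / c"
  have u: "u > 0" and g: "g = c * u" using assms by (auto simp: u_def)
  have "1 + g \<noteq> 1 + u" using u assms by (simp add: g)
  then have "ln (1 + g) - ln (1 + u) < ((1 + g) - (1 + u)) / (1 + u)"
    using u assms by (intro ln_diff_less) auto
  also have "\<dots> = (c - 1) * (u / (1 + u))" using u by (simp add: g field_simps)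
  also have "\<dots> \<le> (c - 1) * ln (1 + u)"
    using ln_add1_gt[OF u] assms by (intro mult_left_mono) (auto simp: add.commute)
  finally show ?thesis by (simp add: u_def algebra_simps)
qed

lemma divide_log_one_plus_less_scaled:
  fixes c g g' K :: real
  assumes "c > 1" "g > 0" "g' \<ge> g / c" "K > 0"
  shows "K / log 2 (1 + g') < c * (K / log 2 (1 + g))"
proof -
  have gc: "g / c > 0" using assms by simp
  have "1 < 1 + g / c" "1 < 1 + g" using gc assms by auto
  then have pos: "ln (1 + g / c) > 0" "ln (1 + g) > 0" by (auto intro: ln_gt_zero)
  have mono: "ln (1 + g / c) \<le> ln (1 + g')" using gc assms by (intro ln_mono) linarith+
  with pos have "ln (1 + g') > 0" by linarith
  have "K / log 2 (1 + g') = K * ln 2 / ln (1 + g')" by (simp add: log_def)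
  also have "\<dots> \<le> K * ln 2 / ln (1 + g / c)"
    using assms pos mono \<open>ln (1 + g') > 0\<close> by (intro divide_left_mono) auto
  also have "\<dots> < K * ln 2 / (ln (1 + g) / c)"
    using ln_one_plus_less_mult_ln_one_plus_divide[OF assms(1,2)] pos assms
    by (intro divide_strict_left_mono) (auto simp: field_simps)
  also have "\<dots> = c * (K / log 2 (1 + g))" by (simp add: log_def)
  finally show ?thesis .
qed

lemma hfun_pos:
  fixes \<kappa> :: "'i::finite \<Rightarrow> 'j::finite \<Rightarrow> bool"
  assumes "\<exists>i. \<kappa> i j" "\<sigma>2 > 0" "\<forall>i j. g i j > 0" "\<forall>i. p i > 0" "\<forall>i. x i \<ge> 0"
  shows "hfun \<kappa> g \<sigma>2 x p j > 0"
proof -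
  have "(\<Sum>i\<in>{i. \<kappa> i j}. p i * g i j) > 0"
    using assms by (intro sum_pos) auto
  moreover have "(\<Sum>k\<in>{k. \<not> \<kappa> k j}. p k * g k j * x k) \<ge> 0"
    using assms by (intro sum_nonneg) (simp add: less_imp_le)
  ultimately show ?thesis using assms unfolding hfun_def by (intro divide_pos_pos) auto
qed

lemma hfun_scaled_power_ge:
  fixes \<kappa> :: "'i::finite \<Rightarrow> 'j::finite \<Rightarrow> bool"
  assumes "\<sigma>2 > 0" "\<forall>i j. g i j > 0" "\<forall>i. p i > 0" "\<forall>i. x i \<ge> 0" "\<forall>i. x' i \<ge> 0"
    and "\<alpha> > 0" "c \<ge> \<alpha>" "\<forall>i. x' i \<le> c * x i"
  shows "hfun \<kappa> g \<sigma>2 x p j / c \<le> hfun \<kappa> g \<sigma>2 x' (\<lambda>i. p i / \<alpha>) j"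
proof -
  define S where "S = (\<Sum>i\<in>{i. \<kappa> i j}. p i * g i j)"
  define I where "I = (\<Sum>k\<in>{k. \<not> \<kappa> k j}. p k * g k j * x k)"
  define I' where "I' = (\<Sum>k\<in>{k. \<not> \<kappa> k j}. p k / \<alpha> * g k j * x' k)"
  have "S \<ge> 0" unfolding S_def using assms by (intro sum_nonneg) (simp add: less_imp_le)
  have "I \<ge> 0" unfolding I_def using assms by (intro sum_nonneg) (simp add: less_imp_le)
  have "I' \<ge> 0" unfolding I'_def using assms by (intro sum_nonneg) (simp add: less_imp_le)
  have "I' \<le> (\<Sum>k\<in>{k. \<not> \<kappa> k j}. c / \<alpha> * (p k * g k j * x k))"
    unfolding I'_def
  proof (rule sum_mono)
    fix k
    have "p k / \<alpha> * g k j * x' k \<le> p k / \<alpha> * g k j * (c * x k)"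
      using assms by (intro mult_left_mono) (auto simp: less_imp_le)
    then show "p k / \<alpha> * g k j * x' k \<le> c / \<alpha> * (p k * g k j * x k)"
      by (simp add: field_simps)
  qed
  also have "\<dots> = c / \<alpha> * I" unfolding I_def by (simp add: sum_distrib_left)
  moreover have "\<sigma>2 \<le> c / \<alpha> * \<sigma>2" using assms by (simp add: field_simps)
  ultimately have "I' + \<sigma>2 \<le> c / \<alpha> * (I + \<sigma>2)" by (simp add: distrib_left)
  then have "(S / \<alpha>) / (c / \<alpha> * (I + \<sigma>2)) \<le> (S / \<alpha>) / (I' + \<sigma>2)"
    using \<open>S \<ge> 0\<close> \<open>I \<ge> 0\<close> \<open>I' \<ge> 0\<close> assms by (intro divide_left_mono) auto
  moreover have "hfun \<kappa> g \<sigma>2 x' (\<lambda>i. p i / \<alpha>) j = (S / \<alpha>) / (I' + \<sigma>2)"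
    unfolding hfun_def S_def I'_def by (simp add: sum_divide_distrib)
  moreover have "hfun \<kappa> g \<sigma>2 x p j / c = (S / \<alpha>) / (c / \<alpha> * (I + \<sigma>2))"
    unfolding hfun_def S_def I_def using assms by (simp add: field_simps)
  ultimately show ?thesis by simp
qed

lemma ffun_pos:
  fixes \<kappa> :: "'i::finite \<Rightarrow> 'j::finite \<Rightarrow> bool"
  assumes "\<exists>j. \<kappa> i j" "M > 0" "B > 0" "\<forall>j. d j > 0" "\<forall>j. \<gamma> j > 0"
  shows "ffun \<kappa> M B \<gamma> d i > 0"
proof -
  have "log 2 (1 + \<gamma> j) > 0" for j using assms(5) by (simp add: add_pos_pos)
  then show ?thesis unfolding ffun_def using assms by (intro sum_pos divide_pos_pos) auto
qed

lemma ffun_less_scaled: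
  fixes \<kappa> :: "'i::finite \<Rightarrow> 'j::finite \<Rightarrow> bool"
  assumes "\<exists>j. \<kappa> i j" "M > 0" "B > 0" "\<forall>j. d j > 0" "\<forall>j. \<gamma> j > 0"
    and "c > 1" "\<forall>j. \<gamma>' j \<ge> \<gamma> j / c"
  shows "ffun \<kappa> M B \<gamma>' d i < c * ffun \<kappa> M B \<gamma> d i"
proof -
  have "ffun \<kappa> M B \<gamma>' d i < (\<Sum>j\<in>{j. \<kappa> i j}. c * (d j / (M * B * log 2 (1 + \<gamma> j))))"
    unfolding ffun_def
  proof (rule sum_strict_mono)
    fix j
    have "d j / (M * B) / log 2 (1 + \<gamma>' j) < c * (d j / (M * B) / log 2 (1 + \<gamma> j))"
      using assms by (intro divide_log_one_plus_less_scaled) auto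
    then show "d j / (M * B * log 2 (1 + \<gamma>' j)) < c * (d j / (M * B * log 2 (1 + \<gamma> j)))"
      by (simp add: divide_divide_eq_left)
  qed (use assms in auto)
  then show ?thesis unfolding ffun_def by (simp add: sum_distrib_left)
qed

lemma fixed_point_scaled_bound_strict:
  fixes \<kappa> :: "'i::finite \<Rightarrow> 'j::finite \<Rightarrow> bool"
  assumes "\<forall>j. \<exists>i. \<kappa> i j" "\<forall>i. \<exists>j. \<kappa> i j"
    and "M > 0" "B > 0" "\<sigma>2 > 0" "\<forall>i j. g i j > 0" "\<forall>j. d j > 0" "\<forall>i. p i > 0"
    and "\<alpha> > 1" "\<forall>i. x i \<ge> 0" "\<forall>i. x' i \<ge> 0"
    and "\<forall>i. x i = ffun \<kappa> M B (hfun \<kappa> g \<sigma>2 x p) d i"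
    and "\<forall>i. x' i = ffun \<kappa> M B (hfun \<kappa> g \<sigma>2 x' (\<lambda>i. p i / \<alpha>)) d i"
    and "c \<ge> \<alpha>" "\<forall>i. x' i \<le> c * x i"
  shows "x' i < c * x i"
proof -
  have "\<forall>j. hfun \<kappa> g \<sigma>2 x p j > 0" using assms by (auto intro: hfun_pos)
  moreover have "\<forall>j. hfun \<kappa> g \<sigma>2 x' (\<lambda>i. p i / \<alpha>) j \<ge> hfun \<kappa> g \<sigma>2 x p j / c"
    using assms by (auto intro: hfun_scaled_power_ge)
  ultimately show ?thesis
    using assms ffun_less_scaled[of \<kappa> i M B d "hfun \<kappa> g \<sigma>2 x p" c] by auto
qed

theorem lemma4:
  fixes \<kappa> :: "'i::finite \<Rightarrow> 'j::finite \<Rightarrow> bool"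
    and g :: "'i \<Rightarrow> 'j \<Rightarrow> real"
    and M B \<sigma>2 \<alpha> :: real
    and d :: "'j \<Rightarrow> real"
    and p x x' :: "'i \<Rightarrow> real"
  assumes "\<forall>j. \<exists>i. \<kappa> i j"
    and "\<forall>i. \<exists>j. \<kappa> i j"
    and "M > 0" and "B > 0" and "\<sigma>2 > 0"
    and "\<forall>i j. g i j > 0"
    and "\<forall>j. d j > 0"
    and "\<forall>i. p i > 0"
    and "\<alpha> > 1"
    and "\<forall>i. x i \<ge> 0"
    and "\<forall>i. x i = ffun \<kappa> M B (hfun \<kappa> g \<sigma>2 x p) d i"
    and "\<forall>i. x' i \<ge> 0"
    and "\<forall>i. x' i = ffun \<kappa> M B (hfun \<kappa> g \<sigma>2 x' (\<lambda>i. p i / \<alpha>)) d i"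
  shows "\<forall>i. x' i < \<alpha> * x i"
proof -
  have x_pos: "x k > 0" for k
    using assms ffun_pos[of \<kappa> k M B d "hfun \<kappa> g \<sigma>2 x p"] hfun_pos[of \<kappa> _ \<sigma>2 g p x] by metis
  define c where "c = Max (range (\<lambda>k. x' k / x k))"
  have "c \<in> range (\<lambda>k. x' k / x k)" unfolding c_def by (rule Max_in) auto
  then obtain i where c_at: "c = x' i / x i" by blast
  have "x' k / x k \<le> c" for k unfolding c_def by (rule Max_ge) auto
  then have bound: "\<forall>k. x' k \<le> c * x k" using x_pos by (auto simp: pos_divide_le_eq)
  have "c < \<alpha>"
  proof (rule ccontr)
    assume "\<not> c < \<alpha>"
    then have "x' i < c * x i"
      using fixed_point_scaled_bound_strict[OF assms(1-10,12,11,13) _ bound] by simp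
    with c_at x_pos[of i] show False by simp
  qed
  then show ?thesis
    using bound x_pos by (smt (verit) mult_strict_right_mono)
qed

end
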